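(* Let $T>0$ and for each $n\ge1$ let $\mathcal{P}_n=\{\tau^n_k:k=0,\dots,N_n\}$ be a partition of $[0,T]$ satisfying the standing partition assumptions below, and let $\mathbf{X}^n=(X^n,\mathbb{X}^n)$ be the rough step function over random increments $\xi^n_j\in\mathbb{R}^d$, $\Xi^n_j\in\mathbb{R}^{d\times d}$. Suppose that for some $q>0$ and $\alpha\in(0,1/2]$, $$\big(\mathbf{E}|X^n(\tau^n_j,\tau^n_k)|^q\big)^{1/q}\lesssim|\tau^n_j-\tau^n_k|^\alpha,\qquad \big(\mathbf{E}|\mathbb{X}^n(\tau^n_j,\tau^n_k)|^{q/2}\big)^{2/q}\lesssim|\tau^n_j-\tau^n_k|^{2\alpha}$$ for all $\tau^n_j,\tau^n_k\in\mathcal{P}_n$, uniformly in $n\ge1$. Then for every $\gamma\in(0,\alpha-q^{-1})$, $$\sup_{n\ge1}\mathbf{P}\big(|||\mathbf{X}^n|||_{\gamma,n}>M\big)\to0\quad\text{as }M\to\infty.$$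
   Context: Standing partition assumptions: $0=\tau^n_0\le\dots\le\tau^n_{N_n}=T$, $\Delta_n=\max_k|\tau^n_{k+1}-\tau^n_k|\to0$, $\sup_nN_n\Delta_n<\infty$; $\tau^n(u)$ is the largest mesh point $\le u$. Rough step function: with $\tau^n_k=\tau^n(t)$, $\tau^n_l=\tau^n(s)$, $X^n(s,t)=\sum_{j=l}^{k-1}\xi^n_j$, $\mathbb{X}^n(s,t)=\sum_{i=l}^{k-1}\sum_{j=l}^{i-1}\xi^n_i\otimes\xi^n_j+\sum_{i=l}^{k-1}\Xi^n_i$ ($\otimes$ the outer product). Discrete Hölder norm: $|||\mathbf{X}^n|||_{\gamma,n}=\max_{\tau^n_j\ne\tau^n_k}\frac{|X^n(\tau^n_j,\tau^n_k)|}{|\tau^n_j-\tau^n_k|^\gamma}+\max_{\tau^n_j\ne\tau^n_k}\frac{|\mathbb{X}^n(\tau^n_j,\tau^n_k)|^{1/2}}{|\tau^n_j-\tau^n_k|^\gamma}$, maxima over mesh points of $\mathcal{P}_n$. *)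

theory Defs
  imports "HOL-Probability.Probability"
begin

definition is_partition :: "real \<Rightarrow> (nat \<Rightarrow> real) \<Rightarrow> nat \<Rightarrow> bool" where
  "is_partition T t Nn \<longleftrightarrow> t 0 = 0 \<and> t Nn = T \<and> (\<forall>k<Nn. t k \<le> t (Suc k))"

definition mesh :: "(nat \<Rightarrow> real) \<Rightarrow> nat \<Rightarrow> real" where
  "mesh t Nn = Max ((\<lambda>k. \<bar>t (Suc k) - t k\<bar>) ` {..<Nn})"

definition outer :: "real^'d \<Rightarrow> real^'d \<Rightarrow> real^'d^'d" where
  "outer x y = (\<chi> a b. x $ a * y $ b)"

definition rsX :: "(nat \<Rightarrow> real^'d) \<Rightarrow> nat \<Rightarrow> nat \<Rightarrow> real^'d" where
  "rsX xi l k = (\<Sum>j\<in>{l..<k}. xi j)"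

definition rsXX :: "(nat \<Rightarrow> real^'d) \<Rightarrow> (nat \<Rightarrow> real^'d^'d) \<Rightarrow> nat \<Rightarrow> nat \<Rightarrow> real^'d^'d" where
  "rsXX xi Xi l k = (\<Sum>i\<in>{l..<k}. \<Sum>j\<in>{l..<i}. outer (xi i) (xi j)) + (\<Sum>i\<in>{l..<k}. Xi i)"

definition disc_holder_norm ::
  "real \<Rightarrow> (nat \<Rightarrow> real) \<Rightarrow> nat \<Rightarrow> (nat \<Rightarrow> real^'d) \<Rightarrow> (nat \<Rightarrow> real^'d^'d) \<Rightarrow> real" where
  "disc_holder_norm \<gamma> t Nn xi Xi =
     (let S = {(j,k). j \<le> Nn \<and> k \<le> Nn \<and> t j \<noteq> t k} in
       Max ((\<lambda>(j,k). norm (rsX xi j k) / \<bar>t j - t k\<bar> powr \<gamma>) ` S)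
     + Max ((\<lambda>(j,k). sqrt (norm (rsXX xi Xi j k)) / \<bar>t j - t k\<bar> powr \<gamma>) ` S))"

end

theory Submission
  imports Defs
begin

text \<open>A discrete Kolmogorov--Garsia chaining argument. At dyadic level r consider O(2^r) pairs of
  mesh points at distance at most 2^(1-r) T. By Markov's inequality and the moment bounds, the
  probability that for one of them |X| > K (2^-r T)^\<gamma> or |XX| > K^2 (2^-r T)^(2\<gamma>) is
  O(K^-q 2^(r (1 - (\<alpha> - \<gamma>) q))), which is summable in r because \<gamma> < \<alpha> - 1/q. Off this event every
  pair of mesh points is joined by a chain of such pairs, one per level, and Chen's relation, which
  makes the condition "|X| \<le> e and |XX| \<le> e^2" subadditive in e, yields |||X|||_\<gamma> \<le> c K. No constant depends on the partition.\<close>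

section \<open>Rough step increments\<close>

lemma outer_sum_left: "outer (sum f S) y = (\<Sum>i\<in>S. outer (f i) y)"
  by (simp add: outer_def vec_eq_iff sum_distrib_right)

lemma outer_sum_right: "outer x (sum f S) = (\<Sum>i\<in>S. outer x (f i))"
  by (simp add: outer_def vec_eq_iff sum_distrib_left)

lemma norm_outer: "norm (outer x y) = norm x * norm y"
proof -
  have row: "norm (outer x y $ a) = norm (x $ a) * norm y" for a
  proof -
    have "outer x y $ a = x $ a *\<^sub>R y" by (simp add: outer_def vec_eq_iff)
    then show ?thesis by simp
  qed
  have "norm (outer x y) = L2_set (\<lambda>a. norm (x $ a) * norm y) UNIV"
    by (subst norm_vec_def, rule L2_set_cong, rule refl, rule row)
  also have "\<dots> = norm x * norm y"
    by (subst L2_set_left_distrib[symmetric]) (simp_all add: norm_vec_def[of x])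
  finally show ?thesis .
qed

lemma outer_zero [simp]: "outer 0 y = 0" "outer x 0 = 0"
  by (simp_all add: outer_def vec_eq_iff)

lemma rsX_empty: "c \<le> a \<Longrightarrow> rsX x a c = 0"
  unfolding rsX_def by simp

lemma rsXX_empty: "c \<le> a \<Longrightarrow> rsXX x X a c = 0"
  unfolding rsXX_def by simp

lemma rsX_concat: "a \<le> b \<Longrightarrow> b \<le> c \<Longrightarrow> rsX x a c = rsX x a b + rsX x b c"
  unfolding rsX_def by (simp add: sum.atLeastLessThan_concat)

lemma rsXX_chen:
  assumes "a \<le> b" "b \<le> c"
  shows "rsXX x X a c = rsXX x X a b + rsXX x X b c + outer (rsX x b c) (rsX x a b)"
proof -
  have concat: "(\<Sum>i\<in>{a..<c}. g i) = (\<Sum>i\<in>{a..<b}. g i) + (\<Sum>i\<in>{b..<c}. g i)"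
    for g :: "nat \<Rightarrow> real^'a^'a"
    using assms by (simp add: sum.atLeastLessThan_concat)
  have "(\<Sum>j\<in>{a..<i}. outer (x i) (x j))
      = (\<Sum>j\<in>{a..<b}. outer (x i) (x j)) + (\<Sum>j\<in>{b..<i}. outer (x i) (x j))"
    if "i \<in> {b..<c}" for i
    using assms that by (simp add: sum.atLeastLessThan_concat)
  then have "(\<Sum>i\<in>{b..<c}. \<Sum>j\<in>{a..<i}. outer (x i) (x j))
      = (\<Sum>i\<in>{b..<c}. \<Sum>j\<in>{a..<b}. outer (x i) (x j))
        + (\<Sum>i\<in>{b..<c}. \<Sum>j\<in>{b..<i}. outer (x i) (x j))"
    by (simp add: sum.distrib)
  moreover have "(\<Sum>i\<in>{b..<c}. \<Sum>j\<in>{a..<b}. outer (x i) (x j)) = outer (rsX x b c) (rsX x a b)"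
    by (simp add: rsX_def outer_sum_left outer_sum_right sum.swap[of _ "{b..<c}"])
  ultimately show ?thesis
    unfolding rsXX_def concat[of "\<lambda>i. \<Sum>j\<in>{a..<i}. outer (x i) (x j)"] concat[of X]
    by (simp add: algebra_simps)
qed

definition rough_bound :: "(nat \<Rightarrow> real^'d) \<Rightarrow> (nat \<Rightarrow> real^'d^'d) \<Rightarrow> nat \<Rightarrow> nat \<Rightarrow> real \<Rightarrow> bool"
  where "rough_bound x X a b e \<longleftrightarrow> norm (rsX x a b) \<le> e \<and> norm (rsXX x X a b) \<le> e\<^sup>2"

lemma rough_bound_mono: "rough_bound x X a b e \<Longrightarrow> 0 \<le> e \<Longrightarrow> e \<le> e' \<Longrightarrow> rough_bound x X a b e'"
  unfolding rough_bound_def by (meson order_trans power_mono)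

lemma rough_bound_empty: "b \<le> a \<Longrightarrow> 0 \<le> e \<Longrightarrow> rough_bound x X a b e"
  by (simp add: rough_bound_def rsX_empty rsXX_empty)

lemma rough_bound_concat:
  assumes "a \<le> b" "b \<le> c" "rough_bound x X a b e1" "rough_bound x X b c e2" "0 \<le> e1" "0 \<le> e2"
  shows "rough_bound x X a c (e1 + e2)"
proof -
  have path: "norm (rsX x a c) \<le> e1 + e2"
    using assms by (simp add: rsX_concat[OF assms(1,2)] rough_bound_def norm_triangle_le add_mono)
  have "norm (rsXX x X a c)
      \<le> norm (rsXX x X a b) + norm (rsXX x X b c) + norm (rsX x b c) * norm (rsX x a b)"
    unfolding rsXX_chen[OF assms(1,2)] by (metis norm_outer norm_triangle_le order_refl add_mono)
  also have "\<dots> \<le> e1\<^sup>2 + e2\<^sup>2 + e2 * e1"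
    using assms unfolding rough_bound_def by (intro add_mono mult_mono) auto
  also have "\<dots> \<le> (e1 + e2)\<^sup>2"
    using assms by (simp add: power2_eq_square algebra_simps)
  finally show ?thesis using path by (simp add: rough_bound_def)
qed

section \<open>Dyadic approximation of mesh points\<close>

locale time_partition =
  fixes T :: real and t :: "nat \<Rightarrow> real" and N :: nat
  assumes T_pos: "0 < T" and t_0: "t 0 = 0" and t_N: "t N = T"
    and t_step: "\<And>k. k < N \<Longrightarrow> t k \<le> t (Suc k)"
begin

lemma t_mono: assumes "a \<le> b" "b \<le> N" shows "t a \<le> t b"
  using assms
proof (induction b rule: dec_induct)
  case (step n) then show ?case using t_step[of n] by simp
qed simp

lemma t_range: "k \<le> N \<Longrightarrow> 0 \<le> t k \<and> t k \<le> T"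
  using t_mono[of 0 k] t_mono[of k N] t_0 t_N by auto

lemma less_of_t_less: "a \<le> N \<Longrightarrow> b \<le> N \<Longrightarrow> t a < t b \<Longrightarrow> a < b"
  using t_mono[of b a] by (cases "a < b") auto

definition dyadic_step :: "nat \<Rightarrow> real" where "dyadic_step r = T / 2^r"

lemma dyadic_step_pos: "0 < dyadic_step r"
  using T_pos by (simp add: dyadic_step_def)

lemma dyadic_step_Suc: "dyadic_step (Suc r) = dyadic_step r / 2"
  by (simp add: dyadic_step_def)

lemma dyadic_step_antimono: "m \<le> n \<Longrightarrow> dyadic_step n \<le> dyadic_step m"
  unfolding dyadic_step_def using T_pos by (intro divide_left_mono power_increasing) auto

lemma less_of_dyadic_step_less: "dyadic_step n < dyadic_step m \<Longrightarrow> m < n"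
  using dyadic_step_antimono[of n m] by (cases "m < n") auto

lemma grid_Suc: "real (2 * k) * dyadic_step (Suc r) = real k * dyadic_step r"
  by (simp add: dyadic_step_Suc)

definition index_below :: "real \<Rightarrow> nat" where "index_below y = Max {k. k \<le> N \<and> t k \<le> y}"

definition index_above :: "real \<Rightarrow> nat" where "index_above y = Min {k. k \<le> N \<and> y \<le> t k}"

lemma index_below:
  assumes "0 \<le> y"
  shows "index_below y \<le> N" "t (index_below y) \<le> y"
    "\<And>k. k \<le> N \<Longrightarrow> t k \<le> y \<Longrightarrow> t k \<le> t (index_below y)"
proof -
  have fin: "finite {k. k \<le> N \<and> t k \<le> y}" by simp
  have "{k. k \<le> N \<and> t k \<le> y} \<noteq> {}" using assms t_0 by auto
  then have "index_below y \<in> {k. k \<le> N \<and> t k \<le> y}"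
    unfolding index_below_def using Max_in[OF fin] by blast
  then show "index_below y \<le> N" "t (index_below y) \<le> y" by auto
  fix k assume "k \<le> N" "t k \<le> y"
  then have "k \<le> index_below y" unfolding index_below_def using Max_ge[OF fin] by auto
  then show "t k \<le> t (index_below y)" using t_mono \<open>index_below y \<le> N\<close> by auto
qed

lemma index_above:
  assumes "y \<le> T"
  shows "index_above y \<le> N" "y \<le> t (index_above y)"
    "\<And>k. k \<le> N \<Longrightarrow> y \<le> t k \<Longrightarrow> t (index_above y) \<le> t k"
proof -
  have fin: "finite {k. k \<le> N \<and> y \<le> t k}" by simp
  have "{k. k \<le> N \<and> y \<le> t k} \<noteq> {}" using assms t_N by auto
  then have "index_above y \<in> {k. k \<le> N \<and> y \<le> t k}"
    unfolding index_above_def using Min_in[OF fin] by blast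
  then show "index_above y \<le> N" "y \<le> t (index_above y)" by auto
  fix k assume "k \<le> N" "y \<le> t k"
  then have "index_above y \<le> k" unfolding index_above_def using Min_le[OF fin] by auto
  then show "t (index_above y) \<le> t k" using t_mono \<open>k \<le> N\<close> by auto
qed

text \<open>The pairs of mesh points used at dyadic level r: each end is the mesh point nearest from
  below or from above to a point of the grid of step T/2^(r+1), the two grid points being at
  most two grid steps apart.\<close>

definition snap :: "bool \<Rightarrow> real \<Rightarrow> nat" where
  "snap below y = (if below then index_below y else index_above y)"

definition dyadic_pairs :: "nat \<Rightarrow> (nat \<times> nat) set" where
  "dyadic_pairs r = Set.filter (\<lambda>(a,b). a \<le> N \<and> b \<le> N \<and> \<bar>t a - t b\<bar> \<le> 2 * dyadic_step r)
    ((\<lambda>(i,j,b1,b2). (snap b1 (real i * dyadic_step (Suc r)), snap b2 (real (i+j) * dyadic_step (Suc r))))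
       ` ({..2^Suc r} \<times> {..2::nat} \<times> (UNIV::bool set) \<times> (UNIV::bool set)))"

lemma finite_dyadic_pairs: "finite (dyadic_pairs r)"
  unfolding dyadic_pairs_def by simp

lemma card_dyadic_pairs: "real (card (dyadic_pairs r)) \<le> 36 * 2^r"
proof -
  let ?D = "{..(2::nat)^Suc r} \<times> {..2::nat} \<times> (UNIV::bool set) \<times> (UNIV::bool set)"
  let ?f = "\<lambda>(i,j,b1,b2). (snap b1 (real i * dyadic_step (Suc r)),
    snap b2 (real (i+j) * dyadic_step (Suc r)))"
  have "card (dyadic_pairs r) \<le> card (?f ` ?D)"
    unfolding dyadic_pairs_def by (rule card_mono) auto
  also have "\<dots> \<le> card ?D" by (rule card_image_le) simp
  also have "card ?D = (2^Suc r + 1) * 12"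
    by (simp add: card_cartesian_product)
  also have "\<dots> \<le> 36 * 2^r" by simp
  finally have "real (card (dyadic_pairs r)) \<le> real (36 * 2^r)" by (simp only: of_nat_le_iff)
  then show ?thesis by simp
qed

lemma dyadic_pairsI:
  assumes "a \<le> N" "b \<le> N" "\<bar>t a - t b\<bar> \<le> 2 * dyadic_step r" "i \<le> 2^Suc r" "j \<le> 2"
    "a = snap bl (real i * dyadic_step (Suc r))" "b = snap br (real (i+j) * dyadic_step (Suc r))"
  shows "(a,b) \<in> dyadic_pairs r"
  unfolding dyadic_pairs_def using assms by (auto intro!: image_eqI[where x="(i,j,bl,br)"])

lemma dyadic_pairsD: "(a,b) \<in> dyadic_pairs r \<Longrightarrow> a \<le> N \<and> b \<le> N \<and> \<bar>t a - t b\<bar> \<le> 2 * dyadic_step r"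
  unfolding dyadic_pairs_def by auto

definition ceil_index :: "nat \<Rightarrow> real \<Rightarrow> nat" where "ceil_index r x = nat \<lceil>x / dyadic_step r\<rceil>"

definition floor_index :: "nat \<Rightarrow> real \<Rightarrow> nat" where "floor_index r x = nat \<lfloor>x / dyadic_step r\<rfloor>"

lemma ceil_index_bounds:
  assumes "0 \<le> x"
  shows "x \<le> real (ceil_index r x) * dyadic_step r" "real (ceil_index r x) * dyadic_step r < x + dyadic_step r"
proof -
  have h: "0 < dyadic_step r" by (rule dyadic_step_pos)
  have real_ceil: "real (ceil_index r x) = of_int \<lceil>x / dyadic_step r\<rceil>"
    using assms h by (simp add: ceil_index_def)
  have c: "of_int \<lceil>x / dyadic_step r\<rceil> - 1 < x / dyadic_step r" "x / dyadic_step r \<le> of_int \<lceil>x / dyadic_step r\<rceil>"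
    by linarith+
  show "x \<le> real (ceil_index r x) * dyadic_step r"
    using c(2) h by (metis pos_divide_le_eq real_ceil)
  show "real (ceil_index r x) * dyadic_step r < x + dyadic_step r"
    using c h by (simp add: real_ceil less_divide_eq algebra_simps)
qed

lemma floor_index_bounds:
  assumes "0 \<le> x"
  shows "real (floor_index r x) * dyadic_step r \<le> x" "x < real (floor_index r x) * dyadic_step r + dyadic_step r"
proof -
  have h: "0 < dyadic_step r" by (rule dyadic_step_pos)
  have real_floor: "real (floor_index r x) = of_int \<lfloor>x / dyadic_step r\<rfloor>"
    using assms h by (simp add: floor_index_def)
  have c: "of_int \<lfloor>x / dyadic_step r\<rfloor> \<le> x / dyadic_step r" "x / dyadic_step r < of_int \<lfloor>x / dyadic_step r\<rfloor> + 1"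
    by linarith+
  show "real (floor_index r x) * dyadic_step r \<le> x"
    using c h by (simp add: real_floor le_divide_eq)
  show "x < real (floor_index r x) * dyadic_step r + dyadic_step r"
    using c h by (simp add: real_floor divide_less_eq algebra_simps)
qed

lemma ceil_index_Suc:
  assumes "0 \<le> x"
  shows "ceil_index (Suc r) x \<le> 2 * ceil_index r x" "2 * ceil_index r x \<le> ceil_index (Suc r) x + 1"
proof -
  define z where "z = x / dyadic_step r"
  have z: "0 \<le> z" using assms dyadic_step_pos[of r] by (simp add: z_def)
  have double: "x / dyadic_step (Suc r) = 2 * z" by (simp add: z_def dyadic_step_Suc)
  have "\<lceil>2*z\<rceil> \<le> 2 * \<lceil>z\<rceil>" "2 * \<lceil>z\<rceil> \<le> \<lceil>2*z\<rceil> + 1" "0 \<le> \<lceil>z\<rceil>" "0 \<le> \<lceil>2*z\<rceil>"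
    using z by linarith+
  then show "ceil_index (Suc r) x \<le> 2 * ceil_index r x" "2 * ceil_index r x \<le> ceil_index (Suc r) x + 1"
    by (simp_all add: ceil_index_def double z_def[symmetric] nat_le_iff nat_mult_distrib)
qed

lemma floor_index_Suc:
  assumes "0 \<le> x"
  shows "2 * floor_index r x \<le> floor_index (Suc r) x" "floor_index (Suc r) x \<le> 2 * floor_index r x + 1"
proof -
  define z where "z = x / dyadic_step r"
  have z: "0 \<le> z" using assms dyadic_step_pos[of r] by (simp add: z_def)
  have double: "x / dyadic_step (Suc r) = 2 * z" by (simp add: z_def dyadic_step_Suc)
  have "2 * \<lfloor>z\<rfloor> \<le> \<lfloor>2*z\<rfloor>" "\<lfloor>2*z\<rfloor> \<le> 2 * \<lfloor>z\<rfloor> + 1" "0 \<le> \<lfloor>z\<rfloor>" "0 \<le> \<lfloor>2*z\<rfloor>"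
    using z by linarith+
  then show "2 * floor_index r x \<le> floor_index (Suc r) x" "floor_index (Suc r) x \<le> 2 * floor_index r x + 1"
    by (simp_all add: floor_index_def double z_def[symmetric] nat_le_iff nat_mult_distrib)
qed

lemma T_div_dyadic_step: "T / dyadic_step r = 2^r"
  using T_pos by (simp add: dyadic_step_def)

lemma ceil_index_le: assumes "0 \<le> x" "x \<le> T" shows "ceil_index r x \<le> 2^r"
proof -
  have "x / dyadic_step r \<le> 2^r"
    using assms dyadic_step_pos[of r] divide_right_mono[of x T] by (simp add: T_div_dyadic_step[symmetric])
  then show ?thesis by (simp add: ceil_index_def nat_le_iff ceiling_le_iff)
qed

lemma floor_index_le: assumes "0 \<le> x" "x \<le> T" shows "floor_index r x \<le> 2^r"
proof -
  have "x / dyadic_step r \<le> 2^r"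
    using assms dyadic_step_pos[of r] divide_right_mono[of x T] by (simp add: T_div_dyadic_step[symmetric])
  then have "\<lfloor>x / dyadic_step r\<rfloor> \<le> 2^r"
    using floor_mono by fastforce
  then show ?thesis by (simp add: floor_index_def nat_le_iff)
qed

definition right_approx :: "nat \<Rightarrow> nat \<Rightarrow> nat" where
  "right_approx m s = index_below (real (ceil_index m (t s)) * dyadic_step m)"

definition left_approx :: "nat \<Rightarrow> nat \<Rightarrow> nat" where
  "left_approx m s = index_above (real (floor_index m (t s)) * dyadic_step m)"

lemma right_approx:
  assumes "s \<le> N"
  shows "right_approx m s \<le> N" "t s \<le> t (right_approx m s)"
    "t (right_approx m s) \<le> real (ceil_index m (t s)) * dyadic_step m"
    "t (right_approx m s) < t s + dyadic_step m"
proof -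
  have ts: "0 \<le> t s" using t_range assms by auto
  note c = ceil_index_bounds[OF ts, of m]
  have y: "0 \<le> real (ceil_index m (t s)) * dyadic_step m" using c ts by linarith
  show "right_approx m s \<le> N" "t (right_approx m s) \<le> real (ceil_index m (t s)) * dyadic_step m"
    using index_below[OF y] by (auto simp: right_approx_def)
  show "t s \<le> t (right_approx m s)" using index_below(3)[OF y assms] c by (simp add: right_approx_def)
  show "t (right_approx m s) < t s + dyadic_step m" using index_below(2)[OF y] c by (simp add: right_approx_def)
qed

lemma left_approx:
  assumes "s \<le> N"
  shows "left_approx m s \<le> N" "t (left_approx m s) \<le> t s"
    "real (floor_index m (t s)) * dyadic_step m \<le> t (left_approx m s)"
    "t s - dyadic_step m < t (left_approx m s)"
proof -
  have ts: "0 \<le> t s" "t s \<le> T" using t_range assms by auto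
  note c = floor_index_bounds[OF ts(1), of m]
  have y: "real (floor_index m (t s)) * dyadic_step m \<le> T" using c ts by linarith
  show "left_approx m s \<le> N" "real (floor_index m (t s)) * dyadic_step m \<le> t (left_approx m s)"
    using index_above[OF y] by (auto simp: left_approx_def)
  show "t (left_approx m s) \<le> t s" using index_above(3)[OF y assms] c by (simp add: left_approx_def)
  show "t s - dyadic_step m < t (left_approx m s)" using index_above(2)[OF y] c by (simp add: left_approx_def)
qed

lemma right_approx_Suc: assumes "s \<le> N" shows "t (right_approx (Suc m) s) \<le> t (right_approx m s)"
proof -
  have ts: "0 \<le> t s" using t_range assms by auto
  have "real (ceil_index (Suc m) (t s)) * dyadic_step (Suc m) \<le> real (2 * ceil_index m (t s)) * dyadic_step (Suc m)"
    using ceil_index_Suc[OF ts, of m] dyadic_step_pos[of "Suc m"] by (intro mult_right_mono) auto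
  then have le: "real (ceil_index (Suc m) (t s)) * dyadic_step (Suc m) \<le> real (ceil_index m (t s)) * dyadic_step m"
    by (simp only: grid_Suc)
  have y: "0 \<le> real (ceil_index m (t s)) * dyadic_step m" using ceil_index_bounds[OF ts, of m] ts by linarith
  show ?thesis unfolding right_approx_def[of m]
    using index_below(3)[OF y right_approx(1)[OF assms, of "Suc m"]] right_approx(3)[OF assms, of "Suc m"] le
    by simp
qed

lemma left_approx_Suc: assumes "s \<le> N" shows "t (left_approx m s) \<le> t (left_approx (Suc m) s)"
proof -
  have ts: "0 \<le> t s" "t s \<le> T" using t_range assms by auto
  have "real (2 * floor_index m (t s)) * dyadic_step (Suc m) \<le> real (floor_index (Suc m) (t s)) * dyadic_step (Suc m)"
    using floor_index_Suc[OF ts(1), of m] dyadic_step_pos[of "Suc m"] by (intro mult_right_mono) auto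
  then have le: "real (floor_index m (t s)) * dyadic_step m \<le> real (floor_index (Suc m) (t s)) * dyadic_step (Suc m)"
    by (simp only: grid_Suc)
  have y: "real (floor_index m (t s)) * dyadic_step m \<le> T" using floor_index_bounds[OF ts(1), of m] ts by linarith
  show ?thesis unfolding left_approx_def[of m]
    using index_above(3)[OF y left_approx(1)[OF assms, of "Suc m"]] left_approx(3)[OF assms, of "Suc m"] le
    by simp
qed

lemma right_approx_dyadic_pair:
  assumes "s \<le> N" shows "(right_approx (Suc m) s, right_approx m s) \<in> dyadic_pairs m"
proof -
  have ts: "0 \<le> t s" "t s \<le> T" using t_range assms by auto
  let ?i = "ceil_index (Suc m) (t s)" and ?k = "ceil_index m (t s)"
  have c: "?i \<le> 2 * ?k" "2 * ?k \<le> ?i + 1" using ceil_index_Suc[OF ts(1)] by auto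
  show ?thesis
  proof (rule dyadic_pairsI[where i="?i" and j="2 * ?k - ?i" and bl=True and br=True])
    show "?i \<le> 2 ^ Suc m" using ceil_index_le[OF ts, of "Suc m"] by simp
    show "2 * ?k - ?i \<le> 2" using c by linarith
    show "right_approx (Suc m) s = snap True (real ?i * dyadic_step (Suc m))"
      by (simp add: snap_def right_approx_def)
    have "?i + (2 * ?k - ?i) = 2 * ?k" using c by linarith
    then show "right_approx m s = snap True (real (?i + (2 * ?k - ?i)) * dyadic_step (Suc m))"
      by (simp only: grid_Suc snap_def right_approx_def if_True)
    show "\<bar>t (right_approx (Suc m) s) - t (right_approx m s)\<bar> \<le> 2 * dyadic_step m"
      using right_approx[OF assms, of m] right_approx[OF assms, of "Suc m"] dyadic_step_Suc[of m]
        dyadic_step_pos[of m] by auto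
  qed (use right_approx[OF assms] in auto)
qed

lemma left_approx_dyadic_pair:
  assumes "s \<le> N" shows "(left_approx m s, left_approx (Suc m) s) \<in> dyadic_pairs m"
proof -
  have ts: "0 \<le> t s" "t s \<le> T" using t_range assms by auto
  let ?i = "2 * floor_index m (t s)" and ?k = "floor_index (Suc m) (t s)"
  have c: "?i \<le> ?k" "?k \<le> ?i + 1" using floor_index_Suc[OF ts(1)] by auto
  show ?thesis
  proof (rule dyadic_pairsI[where i="?i" and j="?k - ?i" and bl=False and br=False])
    show "?i \<le> 2 ^ Suc m" using floor_index_le[OF ts, of m] by simp
    show "?k - ?i \<le> 2" using c by linarith
    show "left_approx m s = snap False (real ?i * dyadic_step (Suc m))"
      by (simp only: grid_Suc snap_def left_approx_def if_False)
    have "?i + (?k - ?i) = ?k" using c by linarith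
    then show "left_approx (Suc m) s = snap False (real (?i + (?k - ?i)) * dyadic_step (Suc m))"
      by (simp add: snap_def left_approx_def)
    show "\<bar>t (left_approx m s) - t (left_approx (Suc m) s)\<bar> \<le> 2 * dyadic_step m"
      using left_approx[OF assms, of m] left_approx[OF assms, of "Suc m"] dyadic_step_Suc[of m]
        dyadic_step_pos[of m] by auto
  qed (use left_approx[OF assms] in auto)
qed

lemma right_left_approx_dyadic_pair:
  assumes s: "s \<le> N" and u: "u \<le> N"
    and m: "dyadic_step m \<le> t u - t s" "t u - t s < 2 * dyadic_step m"
  shows "(right_approx m s, left_approx m u) \<in> dyadic_pairs m"
    "t (right_approx m s) \<le> t (left_approx m u)"
proof -
  have ts: "0 \<le> t s" "t s \<le> T" and tu: "0 \<le> t u" "t u \<le> T" using t_range s u by auto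
  let ?k1 = "ceil_index m (t s)" and ?k2 = "floor_index m (t u)"
  have b1: "t s \<le> real ?k1 * dyadic_step m" "real ?k1 * dyadic_step m < t s + dyadic_step m"
    using ceil_index_bounds[OF ts(1)] by auto
  have b2: "real ?k2 * dyadic_step m \<le> t u" "t u < real ?k2 * dyadic_step m + dyadic_step m"
    using floor_index_bounds[OF tu(1)] by auto
  have "real ?k1 * dyadic_step m < (real ?k2 + 1) * dyadic_step m"
    using b1 b2 m by (simp add: algebra_simps)
  then have "real ?k1 < real ?k2 + 1" using dyadic_step_pos[of m] by (simp only: mult_less_cancel_right_pos)
  then have k12: "?k1 \<le> ?k2" by linarith
  have "real ?k2 * dyadic_step m < (real ?k1 + 2) * dyadic_step m"
    using b1 b2 m by (simp add: algebra_simps)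
  then have "real ?k2 < real ?k1 + 2" using dyadic_step_pos[of m] by (simp only: mult_less_cancel_right_pos)
  then have k21: "?k2 \<le> ?k1 + 1" by linarith
  have "real ?k1 * dyadic_step m \<le> real ?k2 * dyadic_step m"
    using k12 dyadic_step_pos[of m] by (intro mult_right_mono) auto
  then show ordered: "t (right_approx m s) \<le> t (left_approx m u)"
    using right_approx(3)[OF s, of m] left_approx(3)[OF u, of m] by linarith
  show "(right_approx m s, left_approx m u) \<in> dyadic_pairs m"
  proof (rule dyadic_pairsI[where i="2 * ?k1" and j="2 * ?k2 - 2 * ?k1" and bl=True and br=False])
    show "2 * ?k1 \<le> 2 ^ Suc m" using k12 floor_index_le[OF tu, of m] by simp
    show "2 * ?k2 - 2 * ?k1 \<le> 2" using k21 by linarith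
    show "right_approx m s = snap True (real (2 * ?k1) * dyadic_step (Suc m))"
      by (simp only: grid_Suc snap_def right_approx_def if_True)
    have "2 * ?k1 + (2 * ?k2 - 2 * ?k1) = 2 * ?k2" using k12 by linarith
    then show "left_approx m u = snap False (real (2 * ?k1 + (2 * ?k2 - 2 * ?k1)) * dyadic_step (Suc m))"
      by (simp only: grid_Suc snap_def left_approx_def if_False)
    show "\<bar>t (right_approx m s) - t (left_approx m u)\<bar> \<le> 2 * dyadic_step m"
      using ordered right_approx(2)[OF s, of m] left_approx(2)[OF u, of m] m by auto
  qed (use right_approx[OF s] left_approx[OF u] in auto)
qed

end

section \<open>Chaining\<close>

lemma half_powr_less_one: "0 < g \<Longrightarrow> (1/2::real) powr g < 1"
  using powr_less_mono2[of g "1/2" 1] by simp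

text \<open>Two approximation chains plus one dyadic pair of the coarsest level used, relative to the
  step of that level.\<close>

definition chaining_const :: "real \<Rightarrow> real" where
  "chaining_const g = 2 / (1 - (1/2) powr g) + 1"

lemma chaining_const_pos: "0 < g \<Longrightarrow> 0 < chaining_const g"
  using half_powr_less_one[of g] by (simp add: chaining_const_def add_pos_nonneg)

context time_partition
begin

definition ties_vanish :: "(nat \<Rightarrow> real^'d) \<Rightarrow> (nat \<Rightarrow> real^'d^'d) \<Rightarrow> bool" where
  "ties_vanish x X \<longleftrightarrow>
     (\<forall>a b. a \<le> b \<longrightarrow> b \<le> N \<longrightarrow> t a = t b \<longrightarrow> rsX x a b = 0 \<and> rsXX x X a b = 0)"

lemma rough_bound_tie:
  "ties_vanish x X \<Longrightarrow> a \<le> N \<Longrightarrow> b \<le> N \<Longrightarrow> t a = t b \<Longrightarrow> 0 \<le> e \<Longrightarrow> rough_bound x X a b e"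
  by (cases "a \<le> b") (auto simp: ties_vanish_def rough_bound_def rsX_empty rsXX_empty)

text \<open>Concatenation along increasing times; the indices themselves need not be ordered, the
  discrepancy being a tie.\<close>

lemma rough_bound_trans:
  assumes ties: "ties_vanish x X" and idx: "a \<le> N" "b \<le> N" "c \<le> N" and tt: "t a \<le> t b" "t b \<le> t c"
    and ab: "rough_bound x X a b e1" and bc: "rough_bound x X b c e2" and e: "0 \<le> e1" "0 \<le> e2"
  shows "rough_bound x X a c (e1 + e2)"
proof (cases "c \<le> a")
  case True then show ?thesis using e by (intro rough_bound_empty) auto
next
  case False
  consider (ordered) "a \<le> b" "b \<le> c" | (before) "b < a" | (after) "c < b" by linarith
  then show ?thesis
  proof cases
    case ordered then show ?thesis using rough_bound_concat ab bc e by blast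
  next
    case before
    have "t b = t a" using t_mono[of b a] before idx tt by auto
    then have "rsX x b a = 0" "rsXX x X b a = 0" using ties before idx unfolding ties_vanish_def by auto
    then have "rough_bound x X a c e2"
      using bc rsX_concat[of b a c x] rsXX_chen[of b a c x X] before False by (simp add: rough_bound_def)
    then show ?thesis using rough_bound_mono[of x X a c e2 "e1 + e2"] e by auto
  next
    case after
    have "t c = t b" using t_mono[of c b] after idx tt by auto
    then have "rsX x c b = 0" "rsXX x X c b = 0" using ties after idx unfolding ties_vanish_def by auto
    then have "rough_bound x X a c e1"
      using ab rsX_concat[of a c b x] rsXX_chen[of a c b x X] after False by (simp add: rough_bound_def)
    then show ?thesis using rough_bound_mono[of x X a c e1 "e1 + e2"] e by auto
  qed
qed

definition resolves :: "nat \<Rightarrow> bool" where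
  "resolves R \<longleftrightarrow> (\<forall>a b. a \<le> N \<longrightarrow> b \<le> N \<longrightarrow> t a < t b \<longrightarrow> 2 * dyadic_step R < t b - t a)"

lemma exists_resolves: "\<exists>R. resolves R"
proof -
  define gaps where "gaps = (\<lambda>(a,b). t b - t a) ` {(a,b). a \<le> N \<and> b \<le> N \<and> t a < t b}"
  have fin: "finite gaps" unfolding gaps_def
    by (rule finite_imageI, rule finite_subset[of _ "{..N} \<times> {..N}"]) auto
  have "T \<in> gaps" unfolding gaps_def using t_0 t_N T_pos by (auto intro!: image_eqI[where x="(0,N)"])
  then have eps: "0 < Min gaps" using fin by (subst Min_gr_iff) (auto simp: gaps_def)
  obtain R where R: "(1/2::real)^R < Min gaps / (2 * T)"
    using real_arch_pow_inv[of "Min gaps / (2*T)" "1/2"] eps T_pos by auto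
  have "2 * dyadic_step R = 2 * T * (1/2)^R" by (simp add: dyadic_step_def power_one_over)
  also have "\<dots> < Min gaps" using R T_pos by (simp add: field_simps)
  finally have step: "2 * dyadic_step R < Min gaps" .
  have "resolves R" unfolding resolves_def
  proof (intro allI impI)
    fix a b assume "a \<le> N" "b \<le> N" "t a < t b"
    then have "t b - t a \<in> gaps" unfolding gaps_def by (auto intro!: image_eqI[where x="(a,b)"])
    then show "2 * dyadic_step R < t b - t a" using Min_le[OF fin] step by fastforce
  qed
  then show ?thesis by blast
qed

definition dyadic_controlled ::
  "(nat \<Rightarrow> real^'d) \<Rightarrow> (nat \<Rightarrow> real^'d^'d) \<Rightarrow> real \<Rightarrow> real \<Rightarrow> nat \<Rightarrow> bool" where
  "dyadic_controlled x X g K R \<longleftrightarrow>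
     (\<forall>r<R. \<forall>(a,b)\<in>dyadic_pairs r. rough_bound x X a b (K * dyadic_step r powr g))"

text \<open>The geometric tail: the sum over k \<ge> m of (2^-k T)^g.\<close>

definition chain_tail :: "real \<Rightarrow> nat \<Rightarrow> real" where
  "chain_tail g m = dyadic_step m powr g / (1 - (1/2) powr g)"

lemma chain_tail_nonneg: "0 < g \<Longrightarrow> 0 \<le> chain_tail g m"
  using half_powr_less_one[of g] by (simp add: chain_tail_def)

lemma chain_tail_Suc:
  assumes "0 < g" shows "chain_tail g m = dyadic_step m powr g + chain_tail g (Suc m)"
proof -
  define c where "c = (1/2::real) powr g"
  have c: "c < 1" unfolding c_def by (rule half_powr_less_one[OF assms])
  have "dyadic_step (Suc m) = dyadic_step m * (1/2)" by (simp add: dyadic_step_Suc)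
  then have step: "dyadic_step (Suc m) powr g = dyadic_step m powr g * c"
    unfolding c_def by (simp only: powr_mult)
  have "a / (1 - c) = a + a * c / (1 - c)" for a
  proof -
    have "a + a * c / (1 - c) = (a * (1 - c) + a * c) / (1 - c)" using c by (simp add: add_divide_distrib)
    then show ?thesis by (simp add: algebra_simps)
  qed
  then show ?thesis unfolding chain_tail_def step c_def[symmetric] .
qed

lemma rough_bound_right_approx:
  assumes ties: "ties_vanish x X" and ctrl: "dyadic_controlled x X g K R" and R: "resolves R"
    and K: "0 \<le> K" and g: "0 < g" and s: "s \<le> N" and m: "m \<le> R"
  shows "rough_bound x X s (right_approx m s) (K * chain_tail g m)"
  using m
proof (induction m rule: inc_induct)
  case base
  have "t (right_approx R s) = t s"
  proof (rule ccontr)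
    assume "t (right_approx R s) \<noteq> t s"
    then have "2 * dyadic_step R < t (right_approx R s) - t s"
      using R right_approx[OF s, of R] s unfolding resolves_def by auto
    then show False using right_approx[OF s, of R] dyadic_step_pos[of R] by auto
  qed
  then show ?case
    using rough_bound_tie[OF ties s right_approx(1)[OF s, of R]] K chain_tail_nonneg[OF g, of R] by simp
next
  case (step n)
  have "rough_bound x X (right_approx (Suc n) s) (right_approx n s) (K * dyadic_step n powr g)"
    using ctrl step.hyps(2) right_approx_dyadic_pair[OF s] unfolding dyadic_controlled_def by fast
  then have "rough_bound x X s (right_approx n s) (K * chain_tail g (Suc n) + K * dyadic_step n powr g)"
    using rough_bound_trans[OF ties s right_approx(1)[OF s] right_approx(1)[OF s]
        right_approx(2)[OF s] right_approx_Suc[OF s] step.IH] K chain_tail_nonneg[OF g]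
    by simp
  then show ?case using chain_tail_Suc[OF g, of n] by (simp add: algebra_simps)
qed

lemma rough_bound_left_approx:
  assumes ties: "ties_vanish x X" and ctrl: "dyadic_controlled x X g K R" and R: "resolves R"
    and K: "0 \<le> K" and g: "0 < g" and s: "s \<le> N" and m: "m \<le> R"
  shows "rough_bound x X (left_approx m s) s (K * chain_tail g m)"
  using m
proof (induction m rule: inc_induct)
  case base
  have "t (left_approx R s) = t s"
  proof (rule ccontr)
    assume "t (left_approx R s) \<noteq> t s"
    then have "2 * dyadic_step R < t s - t (left_approx R s)"
      using R left_approx[OF s, of R] s unfolding resolves_def by auto
    then show False using left_approx[OF s, of R] dyadic_step_pos[of R] by auto
  qed
  then show ?case
    using rough_bound_tie[OF ties left_approx(1)[OF s, of R] s] K chain_tail_nonneg[OF g, of R] by simp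
next
  case (step n)
  have "rough_bound x X (left_approx n s) (left_approx (Suc n) s) (K * dyadic_step n powr g)"
    using ctrl step.hyps(2) left_approx_dyadic_pair[OF s] unfolding dyadic_controlled_def by fast
  then have "rough_bound x X (left_approx n s) s (K * dyadic_step n powr g + K * chain_tail g (Suc n))"
    using rough_bound_trans[OF ties left_approx(1)[OF s] left_approx(1)[OF s] s
        left_approx_Suc[OF s] left_approx(2)[OF s] _ step.IH] K chain_tail_nonneg[OF g]
    by simp
  then show ?case using chain_tail_Suc[OF g, of n] by (simp add: algebra_simps)
qed

lemma exists_level: assumes "0 < h" "h \<le> T" shows "\<exists>m. dyadic_step m \<le> h \<and> h < 2 * dyadic_step m"
proof -
  obtain n where "(1/2::real)^n < h / T" using real_arch_pow_inv[of "h/T" "1/2"] assms T_pos by auto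
  then have n: "dyadic_step n \<le> h" using T_pos by (simp add: dyadic_step_def power_divide field_simps)
  define m where "m = (LEAST m. dyadic_step m \<le> h)"
  have m: "dyadic_step m \<le> h" unfolding m_def by (rule LeastI[of _ n]) (fact n)
  have "h < 2 * dyadic_step m"
  proof (cases m)
    case 0
    then have "dyadic_step m = T" by (simp add: dyadic_step_def)
    then show ?thesis using m assms T_pos by linarith
  next
    case (Suc k)
    have "\<not> dyadic_step k \<le> h" using not_less_Least[of k "\<lambda>m. dyadic_step m \<le> h"] Suc unfolding m_def by auto
    then show ?thesis using Suc dyadic_step_Suc[of k] by auto
  qed
  with m show ?thesis by blast
qed

text \<open>Join s to u at the coarsest level m with 2^-m T \<le> t u - t s: one dyadic pair of level m in the
  middle, flanked by the two approximation chains.\<close>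

lemma rough_bound_of_dyadic_controlled:
  assumes ties: "ties_vanish x X" and ctrl: "dyadic_controlled x X g K R" and R: "resolves R"
    and K: "0 \<le> K" and g: "0 < g" and s: "s \<le> N" and u: "u \<le> N" and su: "t s < t u"
  shows "rough_bound x X s u (K * chaining_const g * (t u - t s) powr g)"
proof -
  have h: "0 < t u - t s" "t u - t s \<le> T" using su t_range[OF s] t_range[OF u] by auto
  obtain m where m: "dyadic_step m \<le> t u - t s" "t u - t s < 2 * dyadic_step m"
    using exists_level[OF h] by blast
  have "2 * dyadic_step R < t u - t s" using R s u su unfolding resolves_def by auto
  then have mR: "m < R" using m by (intro less_of_dyadic_step_less) auto
  note link = right_left_approx_dyadic_pair[OF s u m]
  have tail: "0 \<le> K * chain_tail g m" using K chain_tail_nonneg[OF g] by auto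
  have right: "rough_bound x X s (right_approx m s) (K * chain_tail g m)"
    using rough_bound_right_approx[OF ties ctrl R K g s] mR by simp
  have middle: "rough_bound x X (right_approx m s) (left_approx m u) (K * dyadic_step m powr g)"
    using ctrl mR link(1) unfolding dyadic_controlled_def by fast
  have left: "rough_bound x X (left_approx m u) u (K * chain_tail g m)"
    using rough_bound_left_approx[OF ties ctrl R K g u] mR by simp
  have first: "rough_bound x X s (left_approx m u) (K * chain_tail g m + K * dyadic_step m powr g)"
    using rough_bound_trans[OF ties s right_approx(1)[OF s] left_approx(1)[OF u] right_approx(2)[OF s]
        link(2) right middle] tail K by simp
  have "t s \<le> t (left_approx m u)" using right_approx(2)[OF s, of m] link(2) by linarith
  then have whole: "rough_bound x X s u (K * chain_tail g m + K * dyadic_step m powr g + K * chain_tail g m)"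
    using rough_bound_trans[OF ties s left_approx(1)[OF u] u _ left_approx(2)[OF u] first left _ tail]
      tail K by simp
  have "K * chain_tail g m + K * dyadic_step m powr g + K * chain_tail g m
      = K * chaining_const g * dyadic_step m powr g"
    unfolding chain_tail_def chaining_const_def by (simp add: algebra_simps add_divide_distrib)
  then have bound: "rough_bound x X s u (K * chaining_const g * dyadic_step m powr g)"
    using whole by simp
  have "dyadic_step m powr g \<le> (t u - t s) powr g"
    using m dyadic_step_pos[of m] g by (intro powr_mono2) auto
  then have "K * chaining_const g * dyadic_step m powr g \<le> K * chaining_const g * (t u - t s) powr g"
    using K chaining_const_pos[OF g] by (intro mult_left_mono) auto
  then show ?thesis
    using rough_bound_mono[OF bound] K chaining_const_pos[OF g] by simp
qed

lemma disc_holder_norm_le_of_dyadic_controlled: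
  assumes ties: "ties_vanish x X" and ctrl: "dyadic_controlled x X g K R" and R: "resolves R"
    and K: "0 \<le> K" and g: "0 < g"
  shows "disc_holder_norm g t N x X \<le> 2 * (K * chaining_const g)"
proof -
  define S where "S = {(j,k). j \<le> N \<and> k \<le> N \<and> t j \<noteq> t k}"
  have quotients: "norm (rsX x j k) / \<bar>t j - t k\<bar> powr g \<le> K * chaining_const g \<and>
      sqrt (norm (rsXX x X j k)) / \<bar>t j - t k\<bar> powr g \<le> K * chaining_const g"
    if jk: "(j, k) \<in> S" for j k
  proof -
    have pos: "0 < \<bar>t j - t k\<bar> powr g" using jk by (simp add: S_def)
    have "rough_bound x X j k (K * chaining_const g * \<bar>t j - t k\<bar> powr g)" (is "rough_bound _ _ _ _ ?E")
    proof (cases "t j < t k")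
      case True
      then show ?thesis using rough_bound_of_dyadic_controlled[OF ties ctrl R K g] jk by (simp add: S_def)
    next
      case False
      then have "k < j" using less_of_t_less jk by (force simp: S_def)
      then show ?thesis using K chaining_const_pos[OF g] by (intro rough_bound_empty) auto
    qed
    then have "norm (rsX x j k) \<le> ?E" and area: "norm (rsXX x X j k) \<le> ?E\<^sup>2"
      unfolding rough_bound_def by auto
    moreover have "sqrt (norm (rsXX x X j k)) \<le> ?E"
      using real_sqrt_le_mono[OF area] K chaining_const_pos[OF g] by simp
    ultimately show ?thesis using pos by (simp add: pos_divide_le_eq)
  qed
  have fin: "finite S" unfolding S_def by (rule finite_subset[of _ "{..N} \<times> {..N}"]) auto
  have ne: "(0, N) \<in> S" unfolding S_def using t_0 t_N T_pos by auto
  have "Max ((\<lambda>(j,k). norm (rsX x j k) / \<bar>t j - t k\<bar> powr g) ` S) \<le> K * chaining_const g"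
    using fin ne quotients by (subst Max_le_iff) auto
  moreover have "Max ((\<lambda>(j,k). sqrt (norm (rsXX x X j k)) / \<bar>t j - t k\<bar> powr g) ` S)
      \<le> K * chaining_const g"
    using fin ne quotients by (subst Max_le_iff) auto
  ultimately show ?thesis unfolding disc_holder_norm_def Let_def S_def[symmetric] by simp
qed

end

section \<open>Tail bound\<close>

context time_partition
begin

lemma dyadic_step_powr: "dyadic_step r powr b = T powr b * (2 powr (-b))^r"
proof (induction r)
  case 0 then show ?case by (simp add: dyadic_step_def)
next
  case (Suc r)
  have "dyadic_step (Suc r) = dyadic_step r * (1/2)" by (simp add: dyadic_step_Suc)
  then have "dyadic_step (Suc r) powr b = dyadic_step r powr b * (1/2) powr b"
    by (simp only: powr_mult)
  also have "(1/2::real) powr b = 2 powr (-b)" by (simp add: powr_divide powr_minus_divide)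
  also have "dyadic_step r powr b * 2 powr (-b) = T powr b * (2 powr (-b))^Suc r"
    by (simp only: Suc.IH power_Suc2 mult.assoc)
  finally show ?case .
qed

text \<open>The union bound over the dyadic pairs of all levels is a geometric series, convergent
  because (\<alpha> - g) q > 1.\<close>

lemma dyadic_level_sum_le:
  fixes C0 K q \<alpha> g :: real
  assumes C0: "0 \<le> C0" and K: "0 < K" and \<beta>: "1 < (\<alpha> - g) * q"
  shows "(\<Sum>r<R. 36 * 2^r * (C0 * (2 * dyadic_step r) powr (\<alpha> * q) / (K * dyadic_step r powr g) powr q))
    \<le> 36 * C0 * 2 powr (\<alpha> * q) * T powr ((\<alpha> - g) * q) / (1 - 2 powr (1 - (\<alpha> - g) * q))
        * K powr (-q)"
proof -
  define \<beta> where "\<beta> = (\<alpha> - g) * q"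
  define \<rho> where "\<rho> = (2::real) powr (1 - \<beta>)"
  define A where "A = 36 * C0 * 2 powr (\<alpha> * q) * T powr \<beta> * K powr (-q)"
  have \<rho>: "0 \<le> \<rho>" "\<rho> < 1" using \<beta> unfolding \<rho>_def \<beta>_def by (auto intro: powr_less_one)
  have A: "0 \<le> A" using C0 by (simp add: A_def)
  have level_term: "36 * 2^r * (C0 * (2 * dyadic_step r) powr (\<alpha> * q) / (K * dyadic_step r powr g) powr q)
      = A * \<rho>^r" for r
  proof -
    have quotient: "C0 * (2 * dyadic_step r) powr (\<alpha> * q) / (K * dyadic_step r powr g) powr q
        = C0 * (2 powr (\<alpha> * q) * K powr (-q) * dyadic_step r powr \<beta>)"
      using dyadic_step_pos[of r] K
      by (simp add: powr_mult powr_powr \<beta>_def powr_diff powr_minus_divide algebra_simps)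
    have scale: "2^r * dyadic_step r powr \<beta> = T powr \<beta> * \<rho>^r"
      by (simp add: dyadic_step_powr \<rho>_def powr_diff powr_minus_divide power_mult_distrib[symmetric]
          algebra_simps)
    have "36 * 2^r * (C0 * (2 * dyadic_step r) powr (\<alpha> * q) / (K * dyadic_step r powr g) powr q)
        = 36 * C0 * 2 powr (\<alpha> * q) * K powr (-q) * (2^r * dyadic_step r powr \<beta>)"
      by (simp only: quotient mult_ac)
    also have "\<dots> = A * \<rho>^r" by (simp only: scale A_def mult_ac)
    finally show ?thesis .
  qed
  have "(\<Sum>r<R. A * \<rho>^r) = A * ((1 - \<rho>^R) / (1 - \<rho>))"
    using \<rho> by (simp add: sum_distrib_left[symmetric] sum_gp_strict)
  also have "\<dots> \<le> A * (1 / (1 - \<rho>))"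
    using \<rho> A by (intro mult_left_mono divide_right_mono) auto
  finally show ?thesis unfolding level_term by (simp add: A_def \<rho>_def \<beta>_def)
qed

end

lemma moment_le_of_root_le:
  fixes I c d D \<beta> p :: real
  assumes I: "0 \<le> I" and root: "I powr (1/p) \<le> c * d powr \<beta>" and d: "0 \<le> d" "d \<le> D"
    and \<beta>: "0 \<le> \<beta>" and p: "0 < p"
  shows "I \<le> \<bar>c\<bar> powr p * D powr (\<beta> * p)"
proof -
  have "I = (I powr (1/p)) powr p" using I p by (simp add: powr_powr)
  also have "\<dots> \<le> (\<bar>c\<bar> * D powr \<beta>) powr p"
  proof (rule powr_mono2)
    show "I powr (1/p) \<le> \<bar>c\<bar> * D powr \<beta>"
      using root d \<beta> by (meson abs_ge_self order_trans mult_mono powr_ge_zero powr_mono2 abs_ge_zero)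
  qed (use p in auto)
  also have "\<dots> = \<bar>c\<bar> powr p * D powr (\<beta> * p)"
    by (simp add: powr_mult powr_powr)
  finally show ?thesis .
qed

definition holder_tail_const :: "real \<Rightarrow> real \<Rightarrow> real \<Rightarrow> real \<Rightarrow> real \<Rightarrow> real" where
  "holder_tail_const C q \<alpha> g T =
     36 * (\<bar>C\<bar> powr q + \<bar>C\<bar> powr (q/2)) * 2 powr (\<alpha> * q) * T powr ((\<alpha> - g) * q)
       / (1 - 2 powr (1 - (\<alpha> - g) * q)) * (2 * chaining_const g) powr q"

locale rough_step_moments = time_partition T t N + prob_space M
  for T t N and M :: "'w measure" +
  fixes xs :: "nat \<Rightarrow> 'w \<Rightarrow> real^'d" and Xs :: "nat \<Rightarrow> 'w \<Rightarrow> real^'d^'d"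
    and C q \<alpha> :: real
  assumes q_pos: "0 < q" and \<alpha>_pos: "0 < \<alpha>"
    and moment_path: "\<And>j k. j \<le> N \<Longrightarrow> k \<le> N \<Longrightarrow>
        integrable M (\<lambda>\<omega>. norm (rsX (\<lambda>i. xs i \<omega>) j k) powr q) \<and>
        (\<integral>\<omega>. norm (rsX (\<lambda>i. xs i \<omega>) j k) powr q \<partial>M) powr (1/q) \<le> C * \<bar>t j - t k\<bar> powr \<alpha>"
    and moment_area: "\<And>j k. j \<le> N \<Longrightarrow> k \<le> N \<Longrightarrow>
        integrable M (\<lambda>\<omega>. norm (rsXX (\<lambda>i. xs i \<omega>) (\<lambda>i. Xs i \<omega>) j k) powr (q/2)) \<and>
        (\<integral>\<omega>. norm (rsXX (\<lambda>i. xs i \<omega>) (\<lambda>i. Xs i \<omega>) j k) powr (q/2) \<partial>M) powr (2/q)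
          \<le> C * \<bar>t j - t k\<bar> powr (2*\<alpha>)"
begin

definition path_power :: "nat \<Rightarrow> nat \<Rightarrow> 'w \<Rightarrow> real" where
  "path_power j k \<omega> = norm (rsX (\<lambda>i. xs i \<omega>) j k) powr q"

definition area_power :: "nat \<Rightarrow> nat \<Rightarrow> 'w \<Rightarrow> real" where
  "area_power j k \<omega> = norm (rsXX (\<lambda>i. xs i \<omega>) (\<lambda>i. Xs i \<omega>) j k) powr (q/2)"

lemma path_power_nonneg: "0 \<le> path_power j k \<omega>"
  by (simp add: path_power_def)

lemma area_power_nonneg: "0 \<le> area_power j k \<omega>"
  by (simp add: area_power_def)

lemma integrable_path_power: "j \<le> N \<Longrightarrow> k \<le> N \<Longrightarrow> integrable M (path_power j k)"
  using moment_path unfolding path_power_def by blast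

lemma integrable_area_power: "j \<le> N \<Longrightarrow> k \<le> N \<Longrightarrow> integrable M (area_power j k)"
  using moment_area unfolding area_power_def by blast

lemma integral_path_power_le:
  assumes "j \<le> N" "k \<le> N" "\<bar>t j - t k\<bar> \<le> D"
  shows "(\<integral>\<omega>. path_power j k \<omega> \<partial>M) \<le> \<bar>C\<bar> powr q * D powr (\<alpha> * q)"
  by (rule moment_le_of_root_le[where d="\<bar>t j - t k\<bar>"])
    (use moment_path[OF assms(1,2)] assms q_pos \<alpha>_pos in \<open>auto simp: path_power_def\<close>)

lemma integral_area_power_le:
  assumes "j \<le> N" "k \<le> N" "\<bar>t j - t k\<bar> \<le> D"
  shows "(\<integral>\<omega>. area_power j k \<omega> \<partial>M) \<le> \<bar>C\<bar> powr (q/2) * D powr (\<alpha> * q)"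
proof -
  have "(\<integral>\<omega>. area_power j k \<omega> \<partial>M) \<le> \<bar>C\<bar> powr (q/2) * D powr ((2*\<alpha>) * (q/2))"
    by (rule moment_le_of_root_le[where d="\<bar>t j - t k\<bar>"])
      (use moment_area[OF assms(1,2)] assms q_pos \<alpha>_pos in \<open>auto simp: area_power_def\<close>)
  then show ?thesis by simp
qed

text \<open>At two mesh points with the same time the moment bounds vanish, so the increments
  between them vanish almost surely.\<close>

lemma AE_ties_vanish: "AE \<omega> in M. ties_vanish (\<lambda>i. xs i \<omega>) (\<lambda>i. Xs i \<omega>)"
proof -
  have AE_zero: "AE \<omega> in M. f \<omega> = 0"
    if "integrable M f" "\<And>\<omega>. 0 \<le> f \<omega>" "(\<integral>\<omega>. f \<omega> \<partial>M) \<le> 0" for f :: "'w \<Rightarrow> real"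
    using that integral_nonneg_eq_0_iff_AE[of M f] integral_nonneg_AE[of f M] by fastforce
  define ties where "ties = {(a,b). a \<le> b \<and> b \<le> N \<and> t a = t b}"
  have "finite ties" unfolding ties_def by (rule finite_subset[of _ "{..N} \<times> {..N}"]) auto
  then have "AE \<omega> in M. \<forall>(a,b)\<in>ties. path_power a b \<omega> = 0 \<and> area_power a b \<omega> = 0"
  proof (rule AE_finite_allI)
    fix ab assume "ab \<in> ties"
    then obtain a b where ab: "ab = (a,b)" "a \<le> N" "b \<le> N" "\<bar>t a - t b\<bar> \<le> 0" unfolding ties_def by auto
    have "AE \<omega> in M. path_power a b \<omega> = 0"
      using integral_path_power_le[OF ab(2-4)] q_pos \<alpha>_pos
      by (intro AE_zero integrable_path_power ab) (auto simp: path_power_def)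
    moreover have "AE \<omega> in M. area_power a b \<omega> = 0"
      using integral_area_power_le[OF ab(2-4)] q_pos \<alpha>_pos
      by (intro AE_zero integrable_area_power ab) (auto simp: area_power_def)
    ultimately show "AE \<omega> in M. case ab of (a,b) \<Rightarrow> path_power a b \<omega> = 0 \<and> area_power a b \<omega> = 0"
      using ab(1) by auto
  qed
  then show ?thesis
    by eventually_elim (auto simp: ties_vanish_def ties_def path_power_def area_power_def)
qed

definition exceeds :: "real \<Rightarrow> nat \<Rightarrow> nat \<Rightarrow> 'w set" where
  "exceeds c a b = {\<omega> \<in> space M. c powr q \<le> path_power a b \<omega> \<or> c powr q \<le> area_power a b \<omega>}"

lemma sets_exceeds: assumes "a \<le> N" "b \<le> N" shows "exceeds c a b \<in> sets M"
proof -
  have [measurable]: "path_power a b \<in> borel_measurable M" "area_power a b \<in> borel_measurable M"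
    using integrable_path_power[OF assms] integrable_area_power[OF assms] by auto
  show ?thesis unfolding exceeds_def by measurable
qed

lemma measure_exceeds_le:
  assumes c: "0 < c" and ab: "a \<le> N" "b \<le> N" "\<bar>t a - t b\<bar> \<le> D"
  shows "measure M (exceeds c a b)
    \<le> (\<bar>C\<bar> powr q + \<bar>C\<bar> powr (q/2)) * D powr (\<alpha> * q) / c powr q"
proof -
  have pos: "0 < c powr q" using c by simp
  have "measure M (exceeds c a b)
      \<le> measure M {\<omega> \<in> space M. c powr q \<le> path_power a b \<omega>}
        + measure M {\<omega> \<in> space M. c powr q \<le> area_power a b \<omega>}"
  proof -
    have [measurable]: "path_power a b \<in> borel_measurable M" "area_power a b \<in> borel_measurable M"
      using integrable_path_power[OF ab(1,2)] integrable_area_power[OF ab(1,2)] by auto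
    have "exceeds c a b = {\<omega> \<in> space M. c powr q \<le> path_power a b \<omega>}
        \<union> {\<omega> \<in> space M. c powr q \<le> area_power a b \<omega>}"
      unfolding exceeds_def by auto
    then show ?thesis by (simp only:) (rule measure_Un_le; measurable)
  qed
  also have "\<dots> \<le> (\<integral>\<omega>. path_power a b \<omega> \<partial>M) / c powr q + (\<integral>\<omega>. area_power a b \<omega> \<partial>M) / c powr q"
    using pos integrable_path_power[OF ab(1,2)] integrable_area_power[OF ab(1,2)]
    by (intro add_mono integral_Markov_inequality_measure[where A="space M"] AE_I2)
      (simp_all add: path_power_nonneg area_power_nonneg)
  also have "\<dots> \<le> \<bar>C\<bar> powr q * D powr (\<alpha> * q) / c powr q + \<bar>C\<bar> powr (q/2) * D powr (\<alpha> * q) / c powr q"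
    using pos integral_path_power_le[OF ab] integral_area_power_le[OF ab]
    by (intro add_mono divide_right_mono) auto
  finally show ?thesis by (simp add: add_divide_distrib distrib_right)
qed

lemma rough_bound_of_not_exceeds:
  assumes \<omega>: "\<omega> \<in> space M" "\<omega> \<notin> exceeds c a b" and c: "0 < c"
  shows "rough_bound (\<lambda>i. xs i \<omega>) (\<lambda>i. Xs i \<omega>) a b c"
  unfolding rough_bound_def
proof
  show "norm (rsX (\<lambda>i. xs i \<omega>) a b) \<le> c"
  proof (rule ccontr)
    assume "\<not> ?thesis"
    then have "c powr q \<le> path_power a b \<omega>"
      unfolding path_power_def using c q_pos by (intro powr_mono2) auto
    then show False using \<omega> by (simp add: exceeds_def)
  qed
  show "norm (rsXX (\<lambda>i. xs i \<omega>) (\<lambda>i. Xs i \<omega>) a b) \<le> c\<^sup>2"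
  proof (rule ccontr)
    assume "\<not> ?thesis"
    then have "(c\<^sup>2) powr (q/2) \<le> area_power a b \<omega>"
      unfolding area_power_def using c q_pos by (intro powr_mono2) auto
    moreover have "c\<^sup>2 = c powr 2" using powr_realpow[of c 2] c by simp
    then have "(c\<^sup>2) powr (q/2) = c powr q" by (simp add: powr_powr)
    ultimately show False using \<omega> by (simp add: exceeds_def)
  qed
qed

definition bad_event :: "real \<Rightarrow> real \<Rightarrow> nat \<Rightarrow> 'w set" where
  "bad_event g K R = (\<Union>r<R. \<Union>ab\<in>dyadic_pairs r. exceeds (K * dyadic_step r powr g) (fst ab) (snd ab))"

lemma sets_UN_exceeds: "(\<Union>ab\<in>dyadic_pairs r. exceeds c (fst ab) (snd ab)) \<in> sets M"
  using finite_dyadic_pairs[of r]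
  by (intro sets.finite_UN) (auto simp: sets_exceeds dest: dyadic_pairsD)

lemma sets_bad_event: "bad_event g K R \<in> sets M"
  unfolding bad_event_def by (intro sets.finite_UN sets_UN_exceeds) simp

lemma measure_bad_event_le:
  assumes K: "0 < K"
  shows "measure M (bad_event g K R) \<le> (\<Sum>r<R. 36 * 2^r *
    ((\<bar>C\<bar> powr q + \<bar>C\<bar> powr (q/2)) * (2 * dyadic_step r) powr (\<alpha> * q) / (K * dyadic_step r powr g) powr q))"
    (is "_ \<le> (\<Sum>r<R. 36 * 2^r * ?level r)")
proof -
  have "measure M (bad_event g K R)
      \<le> (\<Sum>r<R. measure M (\<Union>ab\<in>dyadic_pairs r. exceeds (K * dyadic_step r powr g) (fst ab) (snd ab)))"
    unfolding bad_event_def by (intro finite_measure_subadditive_finite) (auto intro: sets_UN_exceeds)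
  also have "\<dots> \<le> (\<Sum>r<R. \<Sum>ab\<in>dyadic_pairs r. measure M (exceeds (K * dyadic_step r powr g) (fst ab) (snd ab)))"
    by (intro sum_mono finite_measure_subadditive_finite finite_dyadic_pairs)
      (auto simp: sets_exceeds dest: dyadic_pairsD)
  also have "\<dots> \<le> (\<Sum>r<R. real (card (dyadic_pairs r)) * ?level r)"
  proof (intro sum_mono sum_bounded_above)
    fix r ab assume "ab \<in> dyadic_pairs r"
    then show "measure M (exceeds (K * dyadic_step r powr g) (fst ab) (snd ab)) \<le> ?level r"
      using dyadic_pairsD[of "fst ab" "snd ab" r] K dyadic_step_pos[of r]
      by (intro measure_exceeds_le) auto
  qed
  also have "\<dots> \<le> (\<Sum>r<R. 36 * 2^r * ?level r)"
    by (intro sum_mono mult_right_mono card_dyadic_pairs) simp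
  finally show ?thesis .
qed

lemma AE_holder_norm_gt_imp_bad_event:
  assumes R: "resolves R" and g: "0 < g" and K: "0 < K"
  shows "AE \<omega> in M. 2 * (K * chaining_const g) < disc_holder_norm g t N (\<lambda>i. xs i \<omega>) (\<lambda>i. Xs i \<omega>)
    \<longrightarrow> \<omega> \<in> bad_event g K R"
  using AE_ties_vanish AE_space
proof eventually_elim
  case (elim \<omega>)
  have "dyadic_controlled (\<lambda>i. xs i \<omega>) (\<lambda>i. Xs i \<omega>) g K R" if good: "\<omega> \<notin> bad_event g K R"
    unfolding dyadic_controlled_def
  proof (intro allI impI ballI, clarify)
    fix r a b assume "r < R" "(a, b) \<in> dyadic_pairs r"
    then have "\<omega> \<notin> exceeds (K * dyadic_step r powr g) (fst (a, b)) (snd (a, b))"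
      using good unfolding bad_event_def by blast
    then show "rough_bound (\<lambda>i. xs i \<omega>) (\<lambda>i. Xs i \<omega>) a b (K * dyadic_step r powr g)"
      using elim(2) K dyadic_step_pos[of r] by (intro rough_bound_of_not_exceeds) simp_all
  qed
  then have "\<omega> \<notin> bad_event g K R \<Longrightarrow>
      disc_holder_norm g t N (\<lambda>i. xs i \<omega>) (\<lambda>i. Xs i \<omega>) \<le> 2 * (K * chaining_const g)"
    using disc_holder_norm_le_of_dyadic_controlled[OF elim(1) _ R less_imp_le[OF K] g] by blast
  then show ?case by linarith
qed

lemma measure_holder_norm_gt_le:
  assumes g: "0 < g" and \<beta>: "1 < (\<alpha> - g) * q" and K: "0 < K"
  shows "measure M {\<omega> \<in> space M. disc_holder_norm g t N (\<lambda>i. xs i \<omega>) (\<lambda>i. Xs i \<omega>) > K}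
    \<le> holder_tail_const C q \<alpha> g T * K powr (-q)"
proof -
  obtain R where R: "resolves R" using exists_resolves ..
  define K' where "K' = K / (2 * chaining_const g)"
  have c: "0 < chaining_const g" by (rule chaining_const_pos[OF g])
  have K': "0 < K'" "K = 2 * (K' * chaining_const g)" using K c by (auto simp: K'_def)
  have "AE \<omega> in M. \<omega> \<in> {\<omega> \<in> space M. disc_holder_norm g t N (\<lambda>i. xs i \<omega>) (\<lambda>i. Xs i \<omega>) > K}
      \<longrightarrow> \<omega> \<in> bad_event g K' R"
    using AE_holder_norm_gt_imp_bad_event[OF R g K'(1)] by eventually_elim (simp add: K'(2)[symmetric])
  then have "measure M {\<omega> \<in> space M. disc_holder_norm g t N (\<lambda>i. xs i \<omega>) (\<lambda>i. Xs i \<omega>) > K}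
      \<le> measure M (bad_event g K' R)"
    by (rule finite_measure_mono_AE[OF _ sets_bad_event])
  also have "\<dots> \<le> 36 * (\<bar>C\<bar> powr q + \<bar>C\<bar> powr (q/2)) * 2 powr (\<alpha> * q) * T powr ((\<alpha> - g) * q)
        / (1 - 2 powr (1 - (\<alpha> - g) * q)) * K' powr (-q)"
    using measure_bad_event_le[OF K'(1)] dyadic_level_sum_le[OF _ K'(1) \<beta>] by (meson abs_ge_zero add_nonneg_nonneg order_trans powr_ge_zero)
  also have "K' powr (-q) = (2 * chaining_const g) powr q * K powr (-q)"
    using K c by (simp add: K'_def powr_divide powr_minus_divide)
  finally show ?thesis by (simp add: holder_tail_const_def algebra_simps)
qed

end

lemma SUP_tendsto_zero_of_powr_bound:
  fixes f :: "real \<Rightarrow> 'a \<Rightarrow> real"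
  assumes q: "0 < q" and A: "a \<in> A" and nonneg: "\<And>K n. 0 \<le> f K n"
    and bound: "\<And>K n. 0 < K \<Longrightarrow> n \<in> A \<Longrightarrow> f K n \<le> E * K powr (-q)"
  shows "((\<lambda>K. SUP n\<in>A. f K n) \<longlongrightarrow> 0) at_top"
proof (rule tendsto_sandwich[OF _ _ tendsto_const])
  show "\<forall>\<^sub>F K in at_top. 0 \<le> (SUP n\<in>A. f K n)"
    using eventually_gt_at_top[of "0::real"]
  proof eventually_elim
    case (elim K)
    have "bdd_above (f K ` A)" using bound elim by (intro bdd_aboveI2) auto
    then show ?case using nonneg[of K a] cSUP_upper[OF A] by (meson order_trans)
  qed
  show "\<forall>\<^sub>F K in at_top. (SUP n\<in>A. f K n) \<le> E * K powr (-q)"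
    using eventually_gt_at_top[of "0::real"] by eventually_elim (use A bound in \<open>auto intro: cSUP_least\<close>)
  have "((\<lambda>K. K powr (-q)) \<longlongrightarrow> 0) at_top"
    by (rule tendsto_neg_powr) (use q filterlim_ident in auto)
  then show "((\<lambda>K. E * K powr (-q)) \<longlongrightarrow> 0) at_top"
    using tendsto_mult[OF tendsto_const[of E]] by fastforce
qed

theorem lemma6p5:
  fixes M :: "'w measure"
    and T q \<alpha> \<gamma> C B :: real
    and tau :: "nat \<Rightarrow> nat \<Rightarrow> real" and N :: "nat \<Rightarrow> nat"
    and xi :: "nat \<Rightarrow> nat \<Rightarrow> 'w \<Rightarrow> real^'d"
    and Xi :: "nat \<Rightarrow> nat \<Rightarrow> 'w \<Rightarrow> real^'d^'d"
  assumes "prob_space M"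
    and "T > 0"
    and part: "\<And>n. n \<ge> 1 \<Longrightarrow> is_partition T (tau n) (N n)"
    and mesh_lim: "(\<lambda>n. mesh (tau n) (N n)) \<longlonglongrightarrow> 0"
    and mesh_bd: "\<And>n. n \<ge> 1 \<Longrightarrow> real (N n) * mesh (tau n) (N n) \<le> B"
    and meas_xi: "\<And>n j. xi n j \<in> borel_measurable M"
    and meas_Xi: "\<And>n j. Xi n j \<in> borel_measurable M"
    and "q > 0" and "0 < \<alpha>" and "\<alpha> \<le> 1/2"
    and mom1: "\<And>n j k. n \<ge> 1 \<Longrightarrow> j \<le> N n \<Longrightarrow> k \<le> N n \<Longrightarrow>
        integrable M (\<lambda>\<omega>. norm (rsX (\<lambda>i. xi n i \<omega>) j k) powr q) \<and>
        (\<integral>\<omega>. norm (rsX (\<lambda>i. xi n i \<omega>) j k) powr q \<partial>M) powr (1/q)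
          \<le> C * \<bar>tau n j - tau n k\<bar> powr \<alpha>"
    and mom2: "\<And>n j k. n \<ge> 1 \<Longrightarrow> j \<le> N n \<Longrightarrow> k \<le> N n \<Longrightarrow>
        integrable M (\<lambda>\<omega>. norm (rsXX (\<lambda>i. xi n i \<omega>) (\<lambda>i. Xi n i \<omega>) j k) powr (q/2)) \<and>
        (\<integral>\<omega>. norm (rsXX (\<lambda>i. xi n i \<omega>) (\<lambda>i. Xi n i \<omega>) j k) powr (q/2) \<partial>M) powr (2/q)
          \<le> C * \<bar>tau n j - tau n k\<bar> powr (2*\<alpha>)"
    and "0 < \<gamma>" and "\<gamma> < \<alpha> - 1/q"
  shows "((\<lambda>K. SUP n\<in>{1..}. measure M {\<omega> \<in> space M.
            disc_holder_norm \<gamma> (tau n) (N n) (\<lambda>i. xi n i \<omega>) (\<lambda>i. Xi n i \<omega>) > K})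
          \<longlongrightarrow> 0) at_top"
proof -
  note P = assms(1) and T = assms(2) and q = assms(8) and \<alpha> = assms(9) and \<gamma> = assms(13, 14)
  have \<beta>: "1 < (\<alpha> - \<gamma>) * q"
    using \<gamma>(2) q by (simp add: field_simps)
  text \<open>Each partition is treated separately, with a constant depending only on C, q, \<alpha>, \<gamma> and T.\<close>
  have "measure M {\<omega> \<in> space M. disc_holder_norm \<gamma> (tau n) (N n) (\<lambda>i. xi n i \<omega>) (\<lambda>i. Xi n i \<omega>) > K}
      \<le> holder_tail_const C q \<alpha> \<gamma> T * K powr (-q)" if n: "n \<in> {1..}" and K: "0 < K" for K n
  proof -
    have "rough_step_moments T (tau n) (N n) M (xi n) (Xi n) C q \<alpha>"
      using part[of n] n P T q \<alpha> mom1[of n] mom2[of n]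
      by (intro rough_step_moments.intro time_partition.intro rough_step_moments_axioms.intro)
        (auto simp: is_partition_def)
    then show ?thesis by (rule rough_step_moments.measure_holder_norm_gt_le[OF _ \<gamma>(1) \<beta> K])
  qed
  then show ?thesis
    by (intro SUP_tendsto_zero_of_powr_bound[OF q, of 1]) auto
qed

end
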